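(* Let $u:\mathbb{R}\to[0,K]$ have compact support and finite variation, and be a.e. $\mathcal{R}$-valued, and let $\delta>0$. Then for all sufficiently small $\varepsilon>0$ there exists a piecewise constant $\mathcal{R}$-valued function $u^{\varepsilon,\delta}$ with compact support and step lengths at least $\varepsilon$ such that $\Delta(u^{\varepsilon,\delta},u)\le\varepsilon\delta$.
   Context: $\mathcal{R}$ is the set of densities $\{\nu[\eta(0)]\}$ of the extremal invariant shift-invariant probability measures $\nu$ of the particle system on $\{0,\dots,K\}^{\mathbb{Z}}$ with generator $Lf(\eta)=\sum_{x,y}p(y-x)b(\eta(x),\eta(y))[f(\eta^{x,y})-f(\eta)]$ ($\eta^{x,y}$: one particle moved from $x$ to $y$), where $p$ is a probability on $\mathbb{Z}$ whose support generates $\mathbb{Z}$ as a semigroup and which vanishes outside $[-M,M]$ for some $M$, and $b:\mathbb{Z}^+\times\mathbb{Z}^+\to\mathbb{R}^+$ satisfies $b(0,\cdot)=0$, $b(\cdot,K)=0$, $b(i,j)>0$ for $0<i\le K$, $0\le j<K$, and is nondecreasing in its first and nonincreasing in its second argument; $\mathcal{R}$ is a closed subset of $[0,K]$ containing $0$ and $K$. For integrable $u,v:\mathbb{R}\to[0,K]$, $\Delta(u,v)=\sup_{x\in\mathbb{R}}\left|\int_{-\infty}^x[u(y)-v(y)]dy\right|$. *)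

theory Defs
  imports "HOL-Analysis.Analysis"
begin

definition finite_variation :: "(real \<Rightarrow> real) \<Rightarrow> bool" where
  "finite_variation u \<longleftrightarrow>
     (\<exists>B. \<forall>(n::nat) (x::nat \<Rightarrow> real). (\<forall>i<n. x i \<le> x (Suc i)) \<longrightarrow>
         (\<Sum>i<n. \<bar>u (x (Suc i)) - u (x i)\<bar>) \<le> B)"

definition Delta :: "(real \<Rightarrow> real) \<Rightarrow> (real \<Rightarrow> real) \<Rightarrow> real" where
  "Delta u v = (SUP x. \<bar>LINT y:{..x}|lborel. (u y - v y)\<bar>)"

definition step_function_R :: "real set \<Rightarrow> real \<Rightarrow> (real \<Rightarrow> real) \<Rightarrow> bool" where
  "step_function_R R eps v \<longleftrightarrow>
     (\<exists>(n::nat) (x::nat \<Rightarrow> real) (c::nat \<Rightarrow> real).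
        (\<forall>i<n. x i + eps \<le> x (Suc i)) \<and>
        (\<forall>i<n. c i \<in> R) \<and>
        (\<forall>i<n. \<forall>y. x i \<le> y \<and> y < x (Suc i) \<longrightarrow> v y = c i) \<and>
        (\<forall>y. y < x 0 \<or> x n \<le> y \<longrightarrow> v y = 0))"

end

theory Submission
  imports Defs
begin

(* Finite variation forces u to have one-sided limits everywhere, so by compactness there is a
   finite set P such that every short subinterval of the support [a, b] whose interior misses P
   has oscillation at most delta / 4.  For small eps, cut [a, b] into cells of length between
   eps and 2 eps whose interiors miss P.  On each cell, v takes a value of u lying below or above
   the mean of u over the cell; since u is a.e. R-valued such values can be taken in R.  Taking the value below the mean exactly
   when the running integral of v - u is nonnegative keeps that integral within 2 eps delta / 4
   at the cell endpoints, and inside a cell it moves by at most another 2 eps delta / 4. *)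

definition osc_le_on :: "real set \<Rightarrow> real \<Rightarrow> (real \<Rightarrow> real) \<Rightarrow> bool" where
  "osc_le_on S \<eta> u \<longleftrightarrow> (\<forall>y\<in>S. \<forall>z\<in>S. \<bar>u y - u z\<bar> \<le> \<eta>)"

lemma osc_le_on_subset: "osc_le_on S \<eta> u \<Longrightarrow> T \<subseteq> S \<Longrightarrow> osc_le_on T \<eta> u"
  unfolding osc_le_on_def by blast

lemma finite_variation_pairs_bounded:
  assumes "finite_variation u"
  obtains B where
    "\<And>s t n. (\<And>k. s k \<le> t k \<and> t k \<le> s (Suc k)) \<Longrightarrow> (\<Sum>k<n. \<bar>u (t k) - u (s k)\<bar>) \<le> B"
proof -
  obtain B where B: "\<And>n x. \<forall>i<n. x i \<le> x (Suc i) \<Longrightarrow> (\<Sum>i<n. \<bar>u (x (Suc i)) - u (x i)\<bar>) \<le> B"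
    using assms unfolding finite_variation_def by blast
  have "(\<Sum>k<n. \<bar>u (t k) - u (s k)\<bar>) \<le> B"
    if st: "\<And>k. s k \<le> t k \<and> t k \<le> s (Suc k)" for s t :: "nat \<Rightarrow> real" and n
  proof -
    define x where "x i = (if even i then s (i div 2) else t (i div 2))" for i
    have "x i \<le> x (Suc i)" for i
      using st[of "i div 2"] by (cases "even i") (auto simp: x_def elim: oddE)
    have "(\<Sum>k<n. \<bar>u (t k) - u (s k)\<bar>) \<le> (\<Sum>i<2 * n. \<bar>u (x (Suc i)) - u (x i)\<bar>)"
      by (induction n) (auto simp: x_def)
    also have "\<dots> \<le> B"
      using B \<open>\<And>i. x i \<le> x (Suc i)\<close> by blast
    finally show ?thesis .
  qed
  then show ?thesis
    using that by blast
qed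

lemma finite_variation_left_osc:
  assumes fv: "finite_variation u" and \<eta>: "\<eta> > 0"
  shows "\<exists>\<rho>>0. osc_le_on {p - \<rho><..<p} \<eta> u"
proof (rule ccontr)
  assume no_\<rho>: "\<not> ?thesis"
  have "\<exists>yz. m < fst yz \<and> fst yz < snd yz \<and> snd yz < p \<and> \<eta> < \<bar>u (snd yz) - u (fst yz)\<bar>"
    if "m < p" for m
  proof -
    have "\<not> osc_le_on {p - (p - m)<..<p} \<eta> u"
      using no_\<rho> \<open>m < p\<close> diff_gt_0_iff_gt by blast
    then obtain y z where yz: "y \<in> {m<..<p}" "z \<in> {m<..<p}" "\<eta> < \<bar>u y - u z\<bar>"
      unfolding osc_le_on_def by auto
    then consider "y < z" | "z < y"
      using \<eta> by fastforce
    then show ?thesis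
      by cases (use yz in \<open>force simp: abs_minus_commute\<close>)+
  qed
  then obtain F where F: "\<And>m. m < p \<Longrightarrow>
      m < fst (F m) \<and> fst (F m) < snd (F m) \<and> snd (F m) < p \<and> \<eta> < \<bar>u (snd (F m)) - u (fst (F m))\<bar>"
    by metis
  \<comment> \<open>iterating F yields infinitely many disjoint jumps larger than \<eta> below p\<close>
  define m where "m = rec_nat (p - 1) (\<lambda>_ m. snd (F m))"
  have m_less: "m k < p" for k
    by (induction k) (auto simp: m_def F)
  define s where "s k = fst (F (m k))" for k
  define t where "t k = snd (F (m k))" for k
  have st: "s k \<le> t k \<and> t k \<le> s (Suc k)" and jump: "\<eta> < \<bar>u (t k) - u (s k)\<bar>" for k
    using F[OF m_less[of k]] F[OF m_less[of "Suc k"]] by (auto simp: s_def t_def m_def)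
  obtain B where B: "\<And>n. (\<Sum>k<n. \<bar>u (t k) - u (s k)\<bar>) \<le> B"
    using finite_variation_pairs_bounded[OF fv] st by metis
  obtain n :: nat where "B < real n * \<eta>"
    using reals_Archimedean3[OF \<eta>] by blast
  moreover have "real n * \<eta> \<le> (\<Sum>k<n. \<bar>u (t k) - u (s k)\<bar>)"
    using sum_mono[of "{..<n}" "\<lambda>_. \<eta>"] jump by (simp add: less_imp_le)
  ultimately show False
    using B[of n] by linarith
qed

lemma finite_variation_reflect:
  assumes "finite_variation u"
  shows "finite_variation (\<lambda>x. u (- x))"
proof -
  obtain B where B: "\<And>n x. \<forall>i<n. x i \<le> x (Suc i) \<Longrightarrow> (\<Sum>i<n. \<bar>u (x (Suc i)) - u (x i)\<bar>) \<le> B"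
    using assms unfolding finite_variation_def by blast
  have "(\<Sum>i<n. \<bar>u (- x (Suc i)) - u (- x i)\<bar>) \<le> B"
    if x: "\<forall>i<n. x i \<le> x (Suc i)" for n and x :: "nat \<Rightarrow> real"
  proof -
    define y where "y i = - x (n - i)" for i
    have "\<forall>i<n. y i \<le> y (Suc i)"
    proof (intro allI impI)
      fix i assume "i < n"
      then have "n - i = Suc (n - Suc i)"
        by simp
      then show "y i \<le> y (Suc i)"
        using x \<open>i < n\<close> by (simp add: y_def)
    qed
    have "(\<Sum>i<n. \<bar>u (- x (Suc i)) - u (- x i)\<bar>) =
        (\<Sum>i<n. \<bar>u (- x (Suc (n - Suc i))) - u (- x (n - Suc i))\<bar>)"
      by (rule sum.nat_diff_reindex[symmetric])
    also have "\<dots> = (\<Sum>i<n. \<bar>u (y (Suc i)) - u (y i)\<bar>)"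
      by (intro sum.cong) (auto simp: y_def Suc_diff_Suc abs_minus_commute)
    also have "\<dots> \<le> B"
      using B \<open>\<forall>i<n. y i \<le> y (Suc i)\<close> by blast
    finally show ?thesis .
  qed
  then show ?thesis
    unfolding finite_variation_def by blast
qed

lemma finite_variation_one_sided_osc:
  assumes fv: "finite_variation u" and \<eta>: "\<eta> > 0"
  shows "\<exists>\<rho>>0. osc_le_on {p - \<rho><..<p} \<eta> u \<and> osc_le_on {p<..<p + \<rho>} \<eta> u"
proof -
  obtain \<rho>1 where \<rho>1: "\<rho>1 > 0" "osc_le_on {p - \<rho>1<..<p} \<eta> u"
    using finite_variation_left_osc[OF fv \<eta>] by blast
  obtain \<rho>2 where \<rho>2: "\<rho>2 > 0" "osc_le_on {- p - \<rho>2<..<- p} \<eta> (\<lambda>x. u (- x))"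
    using finite_variation_left_osc[OF finite_variation_reflect[OF fv] \<eta>] by blast
  have right: "osc_le_on {p<..<p + \<rho>2} \<eta> u"
    unfolding osc_le_on_def
  proof (intro ballI)
    fix y z assume "y \<in> {p<..<p + \<rho>2}" "z \<in> {p<..<p + \<rho>2}"
    then have "- y \<in> {- p - \<rho>2<..<- p}" "- z \<in> {- p - \<rho>2<..<- p}"
      by auto
    then show "\<bar>u y - u z\<bar> \<le> \<eta>"
      using \<rho>2(2) unfolding osc_le_on_def by fastforce
  qed
  show ?thesis
  proof (intro exI[of _ "min \<rho>1 \<rho>2"] conjI)
    show "osc_le_on {p - min \<rho>1 \<rho>2<..<p} \<eta> u"
      by (rule osc_le_on_subset[OF \<rho>1(2)]) auto
    show "osc_le_on {p<..<p + min \<rho>1 \<rho>2} \<eta> u"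
      by (rule osc_le_on_subset[OF right]) auto
  qed (use \<rho>1 \<rho>2 in auto)
qed

lemma osc_le_on_interval_in_ball:
  assumes left: "osc_le_on {p - r<..<p} \<eta> u" and right: "osc_le_on {p<..<p + r} \<eta> u"
    and sub: "{s<..<t} \<subseteq> ball p r" and "p \<notin> {s<..<t}"
  shows "osc_le_on {s<..<t} \<eta> u"
proof (cases "p \<le> s")
  case True
  then have "{s<..<t} \<subseteq> {p<..<p + r}"
    using sub by (auto simp: subset_eq dist_real_def)
  then show ?thesis
    by (rule osc_le_on_subset[OF right])
next
  case False
  then have "t \<le> p"
    using \<open>p \<notin> {s<..<t}\<close> by auto
  then have "{s<..<t} \<subseteq> {p - r<..<p}"
    using sub by (auto simp: subset_eq dist_real_def)
  then show ?thesis
    by (rule osc_le_on_subset[OF left])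
qed

lemma osc_le_on_cover:
  fixes u :: "real \<Rightarrow> real"
  assumes osc: "\<And>p. \<exists>\<rho>>0. osc_le_on {p - \<rho><..<p} \<eta> u \<and> osc_le_on {p<..<p + \<rho>} \<eta> u"
  obtains P \<kappa> where "finite P" "\<kappa> > 0"
    "\<And>s t. a \<le> s \<Longrightarrow> t \<le> b \<Longrightarrow> t - s < \<kappa> \<Longrightarrow> P \<inter> {s<..<t} = {} \<Longrightarrow> osc_le_on {s<..<t} \<eta> u"
proof -
  from osc have "\<forall>p. \<exists>\<rho>. \<rho> > 0 \<and> osc_le_on {p - \<rho><..<p} \<eta> u \<and> osc_le_on {p<..<p + \<rho>} \<eta> u"
    by blast
  from choice[OF this] obtain \<rho> where
    "\<forall>p. \<rho> p > 0 \<and> osc_le_on {p - \<rho> p<..<p} \<eta> u \<and> osc_le_on {p<..<p + \<rho> p} \<eta> u"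
    ..
  then have \<rho>: "\<And>p. \<rho> p > 0"
    and left: "\<And>p. osc_le_on {p - \<rho> p<..<p} \<eta> u" and right: "\<And>p. osc_le_on {p<..<p + \<rho> p} \<eta> u"
    by simp_all
  have "x \<in> ball x (\<rho> x)" for x
    using \<rho>[of x] by simp
  then have cover: "{a..b} \<subseteq> (\<Union>p\<in>{a..b}. ball p (\<rho> p))"
    by blast
  obtain P where P: "P \<subseteq> {a..b}" "finite P" "{a..b} \<subseteq> (\<Union>p\<in>P. ball p (\<rho> p))"
    by (rule compactE_image[OF compact_Icc _ cover]) simp
  obtain \<kappa> where \<kappa>: "\<kappa> > 0"
    and lebesgue: "\<And>x. x \<in> {a..b} \<Longrightarrow> \<exists>G \<in> (\<lambda>p. ball p (\<rho> p)) ` P. ball x \<kappa> \<subseteq> G"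
    by (rule Heine_Borel_lemma[OF compact_Icc, of a b "(\<lambda>p. ball p (\<rho> p)) ` P"]) (use P in auto)
  have "osc_le_on {s<..<t} \<eta> u"
    if st: "a \<le> s" "t \<le> b" "t - s < \<kappa>" and avoid: "P \<inter> {s<..<t} = {}" for s t
  proof (cases "s < t")
    case True
    then have "(s + t) / 2 \<in> {a..b}"
      using st by auto
    then obtain p where "p \<in> P" and ball: "ball ((s + t) / 2) \<kappa> \<subseteq> ball p (\<rho> p)"
      using lebesgue by blast
    have "{s<..<t} \<subseteq> ball ((s + t) / 2) \<kappa>"
      using st by (auto simp: dist_real_def abs_less_iff field_simps)
    then have "{s<..<t} \<subseteq> ball p (\<rho> p)"
      using ball by blast
    moreover have "p \<notin> {s<..<t}"
      using avoid \<open>p \<in> P\<close> by blast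
    ultimately show ?thesis
      by (rule osc_le_on_interval_in_ball[OF left right])
  qed (simp add: osc_le_on_def)
  then show ?thesis
    using that P(2) \<kappa> by blast
qed

lemma finite_set_separated:
  fixes P :: "real set"
  assumes "finite P"
  obtains g where "g > 0" "\<And>p q. p \<in> P \<Longrightarrow> q \<in> P \<Longrightarrow> p \<noteq> q \<Longrightarrow> g \<le> \<bar>p - q\<bar>"
proof -
  have "finite ((\<lambda>(p, q). p - q) ` (P \<times> P))"
    using assms by simp
  from finite_set_avoid[OF this, of 0] obtain g where
    "g > 0" "\<forall>d\<in>(\<lambda>(p, q). p - q) ` (P \<times> P). d \<noteq> 0 \<longrightarrow> g \<le> dist 0 d"
    by blast
  then show ?thesis
    using that by (force simp: dist_real_def)
qed

(* Invariant of the greedy partition: a step of length eps from x never jumps over a point of P. *)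
definition avoids_ahead :: "real set \<Rightarrow> real \<Rightarrow> real \<Rightarrow> bool" where
  "avoids_ahead P \<epsilon> x \<longleftrightarrow> x \<in> P \<or> (\<forall>q\<in>P. x < q \<longrightarrow> x + \<epsilon> \<le> q)"

lemma partition_step_avoiding:
  assumes \<epsilon>: "\<epsilon> > 0"
    and sep: "\<And>p q. p \<in> P \<Longrightarrow> q \<in> P \<Longrightarrow> p < q \<Longrightarrow> p + 2 * \<epsilon> < q"
    and x: "avoids_ahead P \<epsilon> x"
  shows "\<exists>x'. x + \<epsilon> \<le> x' \<and> x' \<le> x + 2 * \<epsilon> \<and> P \<inter> {x<..<x'} = {} \<and> avoids_ahead P \<epsilon> x'"
proof (cases "\<exists>q\<in>P. x < q \<and> q < x + 2 * \<epsilon>")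
  case True
  then obtain q where q: "q \<in> P" "x < q" "q < x + 2 * \<epsilon>"
    by blast
  have "x \<notin> P"
  proof
    assume "x \<in> P"
    then show False
      using sep[of x q] q by linarith
  qed
  then have "x + \<epsilon> \<le> q"
    using x q unfolding avoids_ahead_def by blast
  moreover have "P \<inter> {x<..<q} = {}"
  proof (rule ccontr)
    assume "P \<inter> {x<..<q} \<noteq> {}"
    then obtain q' where "q' \<in> P" "x < q'" "q' < q"
      by auto
    then show False
      using sep[of q' q] q by linarith
  qed
  ultimately show ?thesis
    using q by (intro exI[of _ q]) (auto simp: avoids_ahead_def)
next
  case False
  then have "P \<inter> {x<..<x + \<epsilon>} = {}" and "\<forall>q\<in>P. x + \<epsilon> < q \<longrightarrow> x + \<epsilon> + \<epsilon> \<le> q"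
    using \<epsilon> by auto
  then show ?thesis
    using \<epsilon> by (intro exI[of _ "x + \<epsilon>"]) (simp add: avoids_ahead_def)
qed

lemma partition_avoiding:
  assumes "a \<in> P" "b \<in> P" "\<epsilon> > 0"
    and sep: "\<And>p q. p \<in> P \<Longrightarrow> q \<in> P \<Longrightarrow> p < q \<Longrightarrow> p + 2 * \<epsilon> < q"
  obtains X :: "nat \<Rightarrow> real" and n where "X 0 = a" "b \<le> X n"
    "\<And>k. X k + \<epsilon> \<le> X (Suc k) \<and> X (Suc k) \<le> X k + 2 * \<epsilon>" "\<And>k. P \<inter> {X k<..<X (Suc k)} = {}"
proof -
  have "\<forall>x. \<exists>x'. avoids_ahead P \<epsilon> x \<longrightarrow>
      x + \<epsilon> \<le> x' \<and> x' \<le> x + 2 * \<epsilon> \<and> P \<inter> {x<..<x'} = {} \<and> avoids_ahead P \<epsilon> x'"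
    using partition_step_avoiding[where P = P, OF \<open>\<epsilon> > 0\<close> sep] by blast
  from choice[OF this] obtain next_pt where next_pt: "\<forall>x. avoids_ahead P \<epsilon> x \<longrightarrow>
      x + \<epsilon> \<le> next_pt x \<and> next_pt x \<le> x + 2 * \<epsilon> \<and> P \<inter> {x<..<next_pt x} = {} \<and>
      avoids_ahead P \<epsilon> (next_pt x)"
    ..
  define X where "X = rec_nat a (\<lambda>_. next_pt)"
  have X_avoids: "avoids_ahead P \<epsilon> (X k)" for k
  proof (induction k)
    case 0
    then show ?case
      using \<open>a \<in> P\<close> by (simp add: X_def avoids_ahead_def)
  next
    case (Suc k)
    then show ?case
      using next_pt Suc.IH by (simp add: X_def)
  qed
  have X_step: "X k + \<epsilon> \<le> X (Suc k) \<and> X (Suc k) \<le> X k + 2 * \<epsilon> \<and> P \<inter> {X k<..<X (Suc k)} = {}" for k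
    using next_pt X_avoids[of k] by (simp add: X_def)
  have X_ge: "a + real k * \<epsilon> \<le> X k" for k
  proof (induction k)
    case (Suc k)
    then show ?case
      using X_step[of k] by (simp add: algebra_simps)
  qed (simp add: X_def)
  obtain n :: nat where "b - a < real n * \<epsilon>"
    using reals_Archimedean3[OF \<open>\<epsilon> > 0\<close>] by blast
  then have "b \<le> X n"
    using X_ge[of n] by linarith
  moreover have "X 0 = a"
    by (simp add: X_def)
  ultimately show ?thesis
    using X_step by (intro that) auto
qed

lemma partition_small_oscillation:
  assumes "a \<in> Q" "b \<in> Q" "0 < \<epsilon>" "0 \<le> \<eta>"
    and sep: "\<And>p q. p \<in> Q \<Longrightarrow> q \<in> Q \<Longrightarrow> p < q \<Longrightarrow> p + 2 * \<epsilon> < q"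
    and cover: "\<And>s t. a \<le> s \<Longrightarrow> t \<le> b \<Longrightarrow> t - s \<le> 2 * \<epsilon> \<Longrightarrow> Q \<inter> {s<..<t} = {} \<Longrightarrow>
      osc_le_on {s<..<t} \<eta> u"
    and zero: "\<And>y. b < y \<Longrightarrow> u y = 0"
  obtains X n where "X 0 = a" "b \<le> X n" "\<And>k. X k + \<epsilon> \<le> X (Suc k) \<and> X (Suc k) \<le> X k + 2 * \<epsilon>"
    "\<And>k. osc_le_on {X k<..<X (Suc k)} \<eta> u"
proof -
  obtain X n where X: "X 0 = a" "b \<le> X n"
    and X_step: "\<And>k. X k + \<epsilon> \<le> X (Suc k) \<and> X (Suc k) \<le> X k + 2 * \<epsilon>"
    and avoid: "\<And>k. Q \<inter> {X k<..<X (Suc k)} = {}"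
    using partition_avoiding[OF assms(1-3) sep] by blast
  have "a \<le> X k" for k
  proof (induction k)
    case (Suc k)
    then show ?case
      using X_step[of k] \<open>0 < \<epsilon>\<close> by linarith
  qed (simp add: X)
  have "osc_le_on {X k<..<X (Suc k)} \<eta> u" for k
  proof (cases "X (Suc k) \<le> b")
    case True
    then show ?thesis
      using cover \<open>a \<le> X k\<close> X_step[of k] avoid[of k] by simp
  next
    case False
    moreover have "b \<notin> {X k<..<X (Suc k)}"
      using avoid[of k] \<open>b \<in> Q\<close> by blast
    ultimately have "b \<le> X k"
      by auto
    then show ?thesis
      using zero \<open>0 \<le> \<eta>\<close> by (auto simp: osc_le_on_def)
  qed
  then show ?thesis
    using that X X_step by blast
qed

lemma finite_variation_fine_partitions:
  assumes fv: "finite_variation u" and \<eta>: "\<eta> > 0"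
    and zero: "\<And>y. y < a \<or> b < y \<Longrightarrow> u y = 0"
  obtains \<epsilon>0 where "\<epsilon>0 > 0" "\<And>\<epsilon>. 0 < \<epsilon> \<Longrightarrow> \<epsilon> < \<epsilon>0 \<Longrightarrow> \<exists>X n. X 0 = a \<and> b \<le> X n \<and>
      (\<forall>k. X k + \<epsilon> \<le> X (Suc k) \<and> X (Suc k) \<le> X k + 2 * \<epsilon>) \<and> (\<forall>k. osc_le_on {X k<..<X (Suc k)} \<eta> u)"
proof -
  obtain P \<kappa> where "finite P" "\<kappa> > 0" and cover:
    "\<And>s t. a \<le> s \<Longrightarrow> t \<le> b \<Longrightarrow> t - s < \<kappa> \<Longrightarrow> P \<inter> {s<..<t} = {} \<Longrightarrow> osc_le_on {s<..<t} \<eta> u"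
    by (rule osc_le_on_cover[where a = a and b = b, OF finite_variation_one_sided_osc[OF fv \<eta>]])
      (rule that)
  define Q where "Q = insert a (insert b P)"
  obtain g where "g > 0" and g: "\<And>p q. p \<in> Q \<Longrightarrow> q \<in> Q \<Longrightarrow> p \<noteq> q \<Longrightarrow> g \<le> \<bar>p - q\<bar>"
    using \<open>finite P\<close> finite_set_separated[of Q] unfolding Q_def by auto
  show ?thesis
  proof (rule that)
    show "min (\<kappa> / 2) (g / 2) > 0"
      using \<open>\<kappa> > 0\<close> \<open>g > 0\<close> by simp
    fix \<epsilon> assume \<epsilon>: "0 < \<epsilon>" "\<epsilon> < min (\<kappa> / 2) (g / 2)"
    have sep_Q: "p + 2 * \<epsilon> < q" if "p \<in> Q" "q \<in> Q" "p < q" for p q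
      using g[OF that(1,2)] that(3) \<epsilon>(2) by simp
    have cover_Q: "osc_le_on {s<..<t} \<eta> u"
      if "a \<le> s" "t \<le> b" "t - s \<le> 2 * \<epsilon>" "Q \<inter> {s<..<t} = {}" for s t
      using cover that \<epsilon>(2) by (auto simp: Q_def)
    have "a \<in> Q" "b \<in> Q" and zero_b: "\<And>y. b < y \<Longrightarrow> u y = 0"
      using zero by (simp_all add: Q_def)
    then obtain X n where "X 0 = a" "b \<le> X n"
      "\<And>k. X k + \<epsilon> \<le> X (Suc k) \<and> X (Suc k) \<le> X k + 2 * \<epsilon>" "\<And>k. osc_le_on {X k<..<X (Suc k)} \<eta> u"
      using partition_small_oscillation[OF _ _ \<epsilon>(1) less_imp_le[OF \<eta>] sep_Q cover_Q zero_b] by blast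
    then show "\<exists>X n. X 0 = a \<and> b \<le> X n \<and> (\<forall>k. X k + \<epsilon> \<le> X (Suc k) \<and> X (Suc k) \<le> X k + 2 * \<epsilon>) \<and>
        (\<forall>k. osc_le_on {X k<..<X (Suc k)} \<eta> u)"
      by blast
  qed
qed

lemma set_integrable_lborel:
  fixes f :: "real \<Rightarrow> real"
  shows "integrable lborel f \<Longrightarrow> A \<in> sets borel \<Longrightarrow> set_integrable lborel A f"
  unfolding set_integrable_def by (rule integrable_mult_indicator) simp_all

lemma set_integral_Iic_split:
  fixes f :: "real \<Rightarrow> real"
  assumes f: "integrable lborel f" and "s \<le> t"
  shows "(LINT y:{..t}|lborel. f y) = (LINT y:{..s}|lborel. f y) + (LINT y:{s<..t}|lborel. f y)"
proof -
  have split: "{..t} = {..s} \<union> {s<..t}"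
    using \<open>s \<le> t\<close> by auto
  show ?thesis
    unfolding split by (rule set_integral_Un) (auto intro: set_integrable_lborel[OF f])
qed

lemma set_integral_Iic_eq_0:
  fixes f :: "real \<Rightarrow> real"
  assumes "\<And>y. y < t \<Longrightarrow> f y = 0"
  shows "(LINT y:{..t}|lborel. f y) = 0"
  unfolding set_lebesgue_integral_def
  by (rule integral_eq_zero_AE, rule eventually_mono[OF AE_lborel_singleton[of t]]) (use assms in \<open>auto simp: indicator_def\<close>)

lemma set_integrable_Ioo_const: "set_integrable lborel {s<..<t :: real} (\<lambda>_. c :: real)"
  unfolding set_integrable_def by (cases "s \<le> t") (simp_all add: integrable_indicator_iff)

lemma set_integral_Ioc_eq_Ioo:
  fixes f :: "real \<Rightarrow> real"
  assumes "integrable lborel f"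
  shows "(LINT y:{s<..t}|lborel. f y) = (LINT y:{s<..<t}|lborel. f y)"
proof -
  have "set_borel_measurable lborel A f" if "A \<in> sets borel" for A
    using set_integrable_lborel[OF assms that]
    unfolding set_integrable_def set_borel_measurable_def by (rule borel_measurable_integrable)
  then show ?thesis
    by (intro set_integral_cong_set) (auto intro: eventually_mono[OF AE_lborel_singleton[of t]])
qed

lemma set_integral_Ioo_const:
  fixes f :: "real \<Rightarrow> real"
  assumes "s \<le> t" "\<And>y. y \<in> {s<..<t} \<Longrightarrow> f y = c"
  shows "(LINT y:{s<..<t}|lborel. f y) = c * (t - s)"
proof -
  have "(LINT y:{s<..<t}|lborel. f y) = (LINT y:{s<..<t}|lborel. c)"
    by (rule set_lebesgue_integral_cong) (use assms(2) in auto)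
  then show ?thesis
    using assms(1) by (simp add: set_integral_const)
qed

lemma set_integral_Ioo_abs_le:
  fixes f :: "real \<Rightarrow> real"
  assumes f: "integrable lborel f" and "s \<le> t" and bound: "\<And>y. y \<in> {s<..<t} \<Longrightarrow> \<bar>f y\<bar> \<le> C"
  shows "\<bar>LINT y:{s<..<t}|lborel. f y\<bar> \<le> C * (t - s)"
proof -
  have int: "set_integrable lborel {s<..<t} f"
    using set_integrable_lborel[OF f] by simp
  have "\<bar>LINT y:{s<..<t}|lborel. f y\<bar> \<le> (LINT y:{s<..<t}|lborel. \<bar>f y\<bar>)"
    using set_integral_norm_bound[OF int] by simp
  also have "\<dots> \<le> (LINT y:{s<..<t}|lborel. C)"
    using bound by (intro set_integral_mono set_integrable_abs[OF int] set_integrable_Ioo_const) auto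
  also have "\<dots> = C * (t - s)"
    using \<open>s \<le> t\<close> by (simp add: set_integral_const)
  finally show ?thesis .
qed

lemma set_integral_Ioo_gt:
  fixes u :: "real \<Rightarrow> real"
  assumes u: "integrable lborel u" and "s < t" and above: "AE y in lborel. y \<in> {s<..<t} \<longrightarrow> A < u y"
  shows "A * (t - s) < (LINT y:{s<..<t}|lborel. u y)"
proof -
  define h where "h y = indicator {s<..<t} y * (u y - A)" for y
  have "integrable lborel (\<lambda>y. indicator {s<..<t} y * u y - indicator {s<..<t} y * A)"
    using set_integrable_lborel[OF u, of "{s<..<t}"] set_integrable_Ioo_const[of s t A]
    unfolding set_integrable_def by (intro Bochner_Integration.integrable_diff) simp_all
  then have h_int: "integrable lborel h"
    by (simp add: h_def[abs_def] right_diff_distrib)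
  have h_nonneg: "AE y in lborel. 0 \<le> h y"
    using above by eventually_elim (auto simp: h_def indicator_def)
  have "integral\<^sup>L lborel h = (LINT y:{s<..<t}|lborel. u y - A)"
    by (simp add: h_def[abs_def] set_lebesgue_integral_def)
  also have "\<dots> = (LINT y:{s<..<t}|lborel. u y) - A * (t - s)"
    using \<open>s < t\<close> set_integrable_lborel[OF u, of "{s<..<t}"] set_integrable_Ioo_const[of s t A]
    by (simp add: set_integral_diff set_integral_const)
  finally have h_integral: "integral\<^sup>L lborel h = (LINT y:{s<..<t}|lborel. u y) - A * (t - s)" .
  have "integral\<^sup>L lborel h \<noteq> 0"
  proof
    assume "integral\<^sup>L lborel h = 0"
    then have "AE y in lborel. h y = 0"
      using integral_nonneg_eq_0_iff_AE[OF h_int h_nonneg] by simp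
    then have "AE y in lborel. y \<notin> {s<..<t}"
      using above by eventually_elim (auto simp: h_def)
    then have "emeasure lborel {s<..<t} = 0"
      by (subst (asm) AE_iff_measurable[of "{s<..<t}"]) auto
    then show False
      using \<open>s < t\<close> by simp
  qed
  moreover have "0 \<le> integral\<^sup>L lborel h"
    using h_nonneg by (rule integral_nonneg_AE)
  ultimately show ?thesis
    using h_integral by linarith
qed

lemma exists_le_average:
  fixes u :: "real \<Rightarrow> real"
  assumes u: "integrable lborel u" and uR: "AE x in lborel. u x \<in> R" and "s < t"
  shows "\<exists>y\<in>{s<..<t}. u y \<in> R \<and> u y * (t - s) \<le> (LINT y:{s<..<t}|lborel. u y)"
proof (rule ccontr)
  assume H: "\<not> ?thesis"
  define A where "A = (LINT y:{s<..<t}|lborel. u y) / (t - s)"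
  have "AE y in lborel. y \<in> {s<..<t} \<longrightarrow> A < u y"
    using uR
  proof eventually_elim
    case (elim y)
    show ?case
    proof
      assume "y \<in> {s<..<t}"
      then have "(LINT y:{s<..<t}|lborel. u y) < u y * (t - s)"
        using H elim by (meson not_le)
      then show "A < u y"
        using \<open>s < t\<close> by (simp add: A_def divide_less_eq)
    qed
  qed
  then have "A * (t - s) < (LINT y:{s<..<t}|lborel. u y)"
    using set_integral_Ioo_gt[OF u \<open>s < t\<close>] by blast
  then show False
    using \<open>s < t\<close> by (simp add: A_def)
qed

lemma exists_ge_average:
  fixes u :: "real \<Rightarrow> real"
  assumes u: "integrable lborel u" and uR: "AE x in lborel. u x \<in> R" and "s < t"
  shows "\<exists>y\<in>{s<..<t}. u y \<in> R \<and> (LINT y:{s<..<t}|lborel. u y) \<le> u y * (t - s)"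
proof -
  have "AE x in lborel. - u x \<in> uminus ` R"
    using uR by eventually_elim auto
  then obtain y where y: "y \<in> {s<..<t}" "- u y \<in> uminus ` R"
    and le: "- u y * (t - s) \<le> (LINT y:{s<..<t}|lborel. - u y)"
    using exists_le_average[of "\<lambda>x. - u x"] u \<open>s < t\<close> by blast
  have "(LINT y:{s<..<t}|lborel. - u y) = - (LINT y:{s<..<t}|lborel. u y)"
    by (rule set_integral_uminus[OF set_integrable_lborel[OF u]]) simp
  then show ?thesis
    using y le by (intro bexI[of _ y]) auto
qed

lemma cell_values_below_above_average:
  fixes u :: "real \<Rightarrow> real" and X :: "nat \<Rightarrow> real"
  assumes u: "integrable lborel u" and uR: "AE x in lborel. u x \<in> R" and cell: "\<And>k. X k < X (Suc k)"
  obtains y_lo y_hi where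
    "\<forall>k. y_lo k \<in> {X k<..<X (Suc k)} \<and> u (y_lo k) \<in> R \<and>
      u (y_lo k) * (X (Suc k) - X k) \<le> (LINT y:{X k<..<X (Suc k)}|lborel. u y)"
    "\<forall>k. y_hi k \<in> {X k<..<X (Suc k)} \<and> u (y_hi k) \<in> R \<and>
      (LINT y:{X k<..<X (Suc k)}|lborel. u y) \<le> u (y_hi k) * (X (Suc k) - X k)"
proof -
  from exists_le_average[OF u uR cell] obtain y_lo where
    "\<forall>k. y_lo k \<in> {X k<..<X (Suc k)} \<and> u (y_lo k) \<in> R \<and>
      u (y_lo k) * (X (Suc k) - X k) \<le> (LINT y:{X k<..<X (Suc k)}|lborel. u y)"
    by (metis (no_types, lifting))
  moreover from exists_ge_average[OF u uR cell] obtain y_hi where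
    "\<forall>k. y_hi k \<in> {X k<..<X (Suc k)} \<and> u (y_hi k) \<in> R \<and>
      (LINT y:{X k<..<X (Suc k)}|lborel. u y) \<le> u (y_hi k) * (X (Suc k) - X k)"
    by (metis (no_types, lifting))
  ultimately show ?thesis
    by (rule that)
qed

lemma greedy_signs_bounded_partial_sums:
  fixes lo hi I :: "nat \<Rightarrow> real"
  assumes "\<And>k. lo k \<le> I k" "\<And>k. I k \<le> hi k" "\<And>k. hi k - lo k \<le> w"
  obtains sel where "\<And>k. \<bar>\<Sum>j<k. (if sel j then lo j else hi j) - I j\<bar> \<le> w"
proof -
  \<comment> \<open>a step taken from a nonnegative partial sum goes down, from a negative one up, by at most w\<close>
  define D where "D = rec_nat 0 (\<lambda>k d. d + ((if 0 \<le> d then lo k else hi k) - I k))"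
  have D_sum: "D k = (\<Sum>j<k. (if 0 \<le> D j then lo j else hi j) - I j)" for k
    by (induction k) (simp_all add: D_def)
  have "0 \<le> w"
    using assms[of 0] by linarith
  have D_bound: "\<bar>D k\<bar> \<le> w" for k
  proof (induction k)
    case (Suc k)
    have "D (Suc k) = D k + ((if 0 \<le> D k then lo k else hi k) - I k)"
      by (simp add: D_def)
    then show ?case
      using Suc.IH assms[of k] by (cases "0 \<le> D k") (auto simp: abs_le_iff)
  qed (simp add: D_def \<open>0 \<le> w\<close>)
  show ?thesis
    by (rule that[of "\<lambda>j. 0 \<le> D j"]) (metis D_bound D_sum)
qed

definition cell_function :: "(nat \<Rightarrow> real) \<Rightarrow> (nat \<Rightarrow> real) \<Rightarrow> nat \<Rightarrow> real \<Rightarrow> real" where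
  "cell_function X c n y = (\<Sum>k<n. c k * indicator {X k..<X (Suc k)} y)"

lemma cell_function_eq:
  assumes X: "incseq X" and "i < n" and y: "X i \<le> y" "y < X (Suc i)"
  shows "cell_function X c n y = c i"
proof -
  have "indicator {X k..<X (Suc k)} y = (if k = i then 1 else 0 :: real)" for k
  proof (cases "k = i")
    case False
    then consider "Suc k \<le> i" | "Suc i \<le> k"
      by linarith
    then have "y \<notin> {X k..<X (Suc k)}"
    proof cases
      case 1
      then show ?thesis
        using incseqD[OF X 1] y by auto
    next
      case 2
      then show ?thesis
        using incseqD[OF X 2] y by auto
    qed
    then show ?thesis
      using False by simp
  qed (use y in simp)
  then have "cell_function X c n y = (\<Sum>k<n. if k = i then c k else 0)"
    unfolding cell_function_def by (intro sum.cong) simp_all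
  then show ?thesis
    using \<open>i < n\<close> by simp
qed

lemma cell_function_outside:
  assumes X: "incseq X" and y: "y < X 0 \<or> X n \<le> y"
  shows "cell_function X c n y = 0"
  unfolding cell_function_def
proof (intro sum.neutral ballI)
  fix k assume "k \<in> {..<n}"
  then have "X 0 \<le> X k" "X (Suc k) \<le> X n"
    using incseqD[OF X] by simp_all
  then show "c k * indicator {X k..<X (Suc k)} y = 0"
    using y by auto
qed

lemma integrable_cell_function: "integrable lborel (cell_function X c n)"
proof -
  have "integrable lborel (indicator {X k..<X (Suc k)} :: real \<Rightarrow> real)" for k
    by (cases "X k \<le> X (Suc k)") (simp_all add: integrable_indicator_iff)
  then show ?thesis
    unfolding cell_function_def[abs_def] by (intro Bochner_Integration.integrable_sum integrable_mult_right)
qed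

lemma step_function_R_cell_function:
  assumes "0 \<le> \<epsilon>" and len: "\<And>k. X k + \<epsilon> \<le> X (Suc k)" and c: "\<And>k. k < n \<Longrightarrow> c k \<in> R"
  shows "step_function_R R \<epsilon> (cell_function X c n)"
proof -
  have X: "incseq X"
  proof (rule incseq_SucI)
    show "X k \<le> X (Suc k)" for k
      using len[of k] \<open>0 \<le> \<epsilon>\<close> by linarith
  qed
  show ?thesis
    unfolding step_function_R_def
    using len c cell_function_eq[OF X] cell_function_outside[OF X]
    by (intro exI[of _ n] exI[of _ X] exI[of _ c]) simp
qed

lemma exists_cell_containing:
  fixes X :: "nat \<Rightarrow> real"
  shows "X 0 \<le> x \<Longrightarrow> x < X n \<Longrightarrow> \<exists>k<n. X k \<le> x \<and> x < X (Suc k)"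
proof (induction n)
  case (Suc n)
  then show ?case
    by (cases "x < X n") (auto intro: less_SucI)
qed simp

lemma set_integral_cell_function_diff:
  assumes X: "incseq X" and u: "integrable lborel u" and zero: "\<And>y. y < X 0 \<Longrightarrow> u y = 0"
  shows "k \<le> n \<Longrightarrow> (LINT y:{..X k}|lborel. cell_function X c n y - u y) =
    (\<Sum>j<k. c j * (X (Suc j) - X j) - (LINT y:{X j<..<X (Suc j)}|lborel. u y))"
proof (induction k)
  case 0
  have "(LINT y:{..X 0}|lborel. cell_function X c n y - u y) = 0"
    by (rule set_integral_Iic_eq_0) (simp add: cell_function_outside[OF X] zero)
  then show ?case
    by simp
next
  case (Suc k)
  let ?f = "\<lambda>y. cell_function X c n y - u y"
  have f: "integrable lborel ?f"
    using integrable_cell_function u by simp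
  have "(LINT y:{..X (Suc k)}|lborel. ?f y) = (LINT y:{..X k}|lborel. ?f y) + (LINT y:{X k<..X (Suc k)}|lborel. ?f y)"
    using incseqD[OF X, of k "Suc k"] by (intro set_integral_Iic_split[OF f]) simp
  moreover have "(LINT y:{X k<..X (Suc k)}|lborel. ?f y) =
      (LINT y:{X k<..<X (Suc k)}|lborel. cell_function X c n y) - (LINT y:{X k<..<X (Suc k)}|lborel. u y)"
    unfolding set_integral_Ioc_eq_Ioo[OF f]
    by (intro set_integral_diff set_integrable_lborel integrable_cell_function u) simp_all
  moreover have "(LINT y:{X k<..<X (Suc k)}|lborel. cell_function X c n y) = c k * (X (Suc k) - X k)"
    using incseqD[OF X, of k "Suc k"] Suc.prems
    by (intro set_integral_Ioo_const) (auto intro: cell_function_eq[OF X])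
  ultimately show ?case
    using Suc by simp
qed

lemma Delta_cell_function_le:
  assumes X: "incseq X" and u: "integrable lborel u" and "0 \<le> \<eta>"
    and zero: "\<And>y. y < X 0 \<or> X n < y \<Longrightarrow> u y = 0"
    and short: "\<And>k. k < n \<Longrightarrow> X (Suc k) \<le> X k + 2 * \<epsilon>"
    and close: "\<And>k y. k < n \<Longrightarrow> y \<in> {X k<..<X (Suc k)} \<Longrightarrow> \<bar>c k - u y\<bar> \<le> \<eta>"
    and balanced: "\<And>k. k \<le> n \<Longrightarrow>
      \<bar>\<Sum>j<k. c j * (X (Suc j) - X j) - (LINT y:{X j<..<X (Suc j)}|lborel. u y)\<bar> \<le> 2 * \<epsilon> * \<eta>"
  shows "Delta (cell_function X c n) u \<le> 4 * \<epsilon> * \<eta>"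
proof -
  define f where "f y = cell_function X c n y - u y" for y
  define G where "G x = (LINT y:{..x}|lborel. f y)" for x
  have f: "integrable lborel f"
    using integrable_cell_function u by (simp add: f_def[abs_def])
  have G_split: "G x = G s + (LINT y:{s<..<x}|lborel. f y)" if "s \<le> x" for s x
    unfolding G_def using set_integral_Iic_split[OF f that] set_integral_Ioc_eq_Ioo[OF f] by simp
  have G_nodes: "\<bar>G (X k)\<bar> \<le> 2 * \<epsilon> * \<eta>" if "k \<le> n" for k
    using balanced[OF that] set_integral_cell_function_diff[OF X u _ that] zero
    by (simp add: G_def f_def)
  have "0 \<le> 2 * \<epsilon> * \<eta>"
    using G_nodes[of 0] by linarith
  have "\<bar>G x\<bar> \<le> 4 * \<epsilon> * \<eta>" for x
  proof -
    consider "x \<le> X 0" | k where "k < n" "X k \<le> x" "x < X (Suc k)" | "X n \<le> x"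
      using exists_cell_containing[of X x n] by fastforce
    then show ?thesis
    proof cases
      case 1
      then have "G x = 0"
        unfolding G_def by (intro set_integral_Iic_eq_0) (simp add: f_def cell_function_outside[OF X] zero)
      then show ?thesis
        using \<open>0 \<le> 2 * \<epsilon> * \<eta>\<close> by simp
    next
      case 2
      have "\<bar>LINT y:{X k<..<x}|lborel. f y\<bar> \<le> \<eta> * (x - X k)"
        using 2 close cell_function_eq[OF X]
        by (intro set_integral_Ioo_abs_le[OF f]) (auto simp: f_def)
      also have "\<dots> \<le> \<eta> * (2 * \<epsilon>)"
        using 2 short[of k] \<open>0 \<le> \<eta>\<close> by (intro mult_left_mono) auto
      finally show ?thesis
        using G_split[of "X k" x] G_nodes[of k] 2 by (simp add: algebra_simps)
    next
      case 3
      have "(LINT y:{X n<..<x}|lborel. f y) = 0 * (x - X n)"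
        using 3 by (intro set_integral_Ioo_const) (auto simp: f_def cell_function_outside[OF X] zero)
      then show ?thesis
        using G_split[of "X n" x] G_nodes[of n] 3 \<open>0 \<le> 2 * \<epsilon> * \<eta>\<close> by simp
    qed
  qed
  then show ?thesis
    unfolding Delta_def by (intro cSUP_least) (auto simp: G_def f_def)
qed

lemma step_approximation_on_partition:
  fixes u :: "real \<Rightarrow> real" and X :: "nat \<Rightarrow> real"
  assumes u: "integrable lborel u" and uR: "AE x in lborel. u x \<in> R"
    and "0 < \<epsilon>" and "0 \<le> \<eta>"
    and zero: "\<And>y. y < X 0 \<or> X n < y \<Longrightarrow> u y = 0"
    and len: "\<And>k. X k + \<epsilon> \<le> X (Suc k) \<and> X (Suc k) \<le> X k + 2 * \<epsilon>"
    and osc: "\<And>k. osc_le_on {X k<..<X (Suc k)} \<eta> u"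
  shows "\<exists>v. step_function_R R \<epsilon> v \<and> Delta v u \<le> 4 * \<epsilon> * \<eta>"
proof -
  define l where "l k = X (Suc k) - X k" for k
  define I where "I k = (LINT y:{X k<..<X (Suc k)}|lborel. u y)" for k
  have cell: "X k < X (Suc k)" for k
    using len[of k] \<open>0 < \<epsilon>\<close> by linarith
  obtain y_lo y_hi where
    y_lo: "\<forall>k. y_lo k \<in> {X k<..<X (Suc k)} \<and> u (y_lo k) \<in> R \<and> u (y_lo k) * l k \<le> I k" and
    y_hi: "\<forall>k. y_hi k \<in> {X k<..<X (Suc k)} \<and> u (y_hi k) \<in> R \<and> I k \<le> u (y_hi k) * l k"
    using cell_values_below_above_average[where X = X, OF u uR cell] unfolding l_def I_def by blast
  have "u (y_hi k) * l k - u (y_lo k) * l k \<le> 2 * \<epsilon> * \<eta>" for k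
  proof -
    have "u (y_hi k) - u (y_lo k) \<le> \<eta>"
      using osc[of k] y_lo y_hi unfolding osc_le_on_def by fastforce
    then have "(u (y_hi k) - u (y_lo k)) * l k \<le> \<eta> * (2 * \<epsilon>)"
      using len[of k] cell[of k] \<open>0 \<le> \<eta>\<close> by (intro mult_mono) (auto simp: l_def)
    then show ?thesis
      by (simp add: algebra_simps)
  qed
  then obtain sel where sel: "\<And>k. \<bar>\<Sum>j<k. (if sel j then u (y_lo j) * l j else u (y_hi j) * l j) - I j\<bar>
      \<le> 2 * \<epsilon> * \<eta>"
    using greedy_signs_bounded_partial_sums[of "\<lambda>k. u (y_lo k) * l k" I "\<lambda>k. u (y_hi k) * l k"]
      y_lo y_hi by blast
  define c where "c k = (if sel k then u (y_lo k) else u (y_hi k))" for k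
  have "incseq X"
    using cell by (intro incseq_SucI less_imp_le)
  have "step_function_R R \<epsilon> (cell_function X c n)"
    using len y_lo y_hi \<open>0 < \<epsilon>\<close> by (intro step_function_R_cell_function) (auto simp: c_def)
  moreover have "Delta (cell_function X c n) u \<le> 4 * \<epsilon> * \<eta>"
  proof (rule Delta_cell_function_le[OF \<open>incseq X\<close> u \<open>0 \<le> \<eta>\<close> zero])
    show "X (Suc k) \<le> X k + 2 * \<epsilon>" for k
      using len by blast
    show "\<bar>c k - u y\<bar> \<le> \<eta>" if "y \<in> {X k<..<X (Suc k)}" for k y
      using osc[of k] y_lo y_hi that unfolding osc_le_on_def c_def by auto
    show "\<bar>\<Sum>j<k. c j * (X (Suc j) - X j) - (LINT y:{X j<..<X (Suc j)}|lborel. u y)\<bar>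
        \<le> 2 * \<epsilon> * \<eta>" for k
    proof -
      have "(\<Sum>j<k. c j * (X (Suc j) - X j) - (LINT y:{X j<..<X (Suc j)}|lborel. u y)) =
          (\<Sum>j<k. (if sel j then u (y_lo j) * l j else u (y_hi j) * l j) - I j)"
        by (intro sum.cong) (simp_all add: c_def l_def I_def)
      then show ?thesis
        using sel[of k] by simp
    qed
  qed
  ultimately show ?thesis
    by blast
qed

lemma compact_support_vanishes_outside:
  fixes u :: "real \<Rightarrow> real"
  assumes "compact (closure {x. u x \<noteq> 0})"
  obtains a b where "\<And>y. y < a \<or> b < y \<Longrightarrow> u y = 0"
proof -
  obtain M where M: "\<forall>x\<in>closure {x. u x \<noteq> 0}. \<bar>x\<bar> \<le> M"
    using compact_imp_bounded[OF assms] unfolding bounded_real ..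
  have "u y = 0" if "y < - M \<or> M < y" for y
  proof (rule ccontr)
    assume "u y \<noteq> 0"
    then have "y \<in> closure {x. u x \<noteq> 0}"
      using closure_subset[of "{x. u x \<noteq> 0}"] by auto
    then have "\<bar>y\<bar> \<le> M"
      using M by blast
    then show False
      using that by (simp add: abs_le_iff)
  qed
  then show ?thesis
    by (rule that)
qed

theorem lemma5p5:
  fixes R :: "real set" and K :: nat and u :: "real \<Rightarrow> real" and \<delta> :: real
  assumes K: "K \<ge> 1"
    and R_closed: "closed R" and R_sub: "R \<subseteq> {0..real K}"
    and R0: "0 \<in> R" and RK: "real K \<in> R"
    and u_range: "\<And>x. 0 \<le> u x \<and> u x \<le> real K"
    and u_int: "integrable lborel u"
    and u_supp: "compact (closure {x. u x \<noteq> 0})"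
    and u_bv: "finite_variation u"
    and u_R: "AE x in lborel. u x \<in> R"
    and \<delta>: "\<delta> > 0"
  shows "\<exists>\<epsilon>0>0. \<forall>\<epsilon>. 0 < \<epsilon> \<and> \<epsilon> < \<epsilon>0 \<longrightarrow>
           (\<exists>v. step_function_R R \<epsilon> v \<and> Delta v u \<le> \<epsilon> * \<delta>)"
proof -
  obtain a b where zero: "\<And>y. y < a \<or> b < y \<Longrightarrow> u y = 0"
    by (rule compact_support_vanishes_outside[OF u_supp]) (rule that)
  have "\<delta> / 4 > 0"
    using \<delta> by simp
  obtain \<epsilon>0 where "\<epsilon>0 > 0" and partitions: "\<And>\<epsilon>. 0 < \<epsilon> \<Longrightarrow> \<epsilon> < \<epsilon>0 \<Longrightarrow> \<exists>X n. X 0 = a \<and> b \<le> X n \<and>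
      (\<forall>k. X k + \<epsilon> \<le> X (Suc k) \<and> X (Suc k) \<le> X k + 2 * \<epsilon>) \<and> (\<forall>k. osc_le_on {X k<..<X (Suc k)} (\<delta> / 4) u)"
    using finite_variation_fine_partitions[OF u_bv \<open>\<delta> / 4 > 0\<close> zero] by blast
  have "\<exists>v. step_function_R R \<epsilon> v \<and> Delta v u \<le> \<epsilon> * \<delta>" if \<epsilon>: "0 < \<epsilon>" "\<epsilon> < \<epsilon>0" for \<epsilon>
  proof -
    obtain X n where X: "X 0 = a" "b \<le> X n"
      and len: "\<forall>k. X k + \<epsilon> \<le> X (Suc k) \<and> X (Suc k) \<le> X k + 2 * \<epsilon>"
      and osc: "\<forall>k. osc_le_on {X k<..<X (Suc k)} (\<delta> / 4) u"
      using partitions[OF \<epsilon>] by blast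
    have "u y = 0" if "y < X 0 \<or> X n < y" for y
      using zero that X by force
    then show ?thesis
      using step_approximation_on_partition[OF u_int u_R \<open>0 < \<epsilon>\<close>, of "\<delta> / 4" X n] len osc \<delta> by auto
  qed
  then show ?thesis
    using \<open>\<epsilon>0 > 0\<close> by blast
qed

end
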